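(* Let $\pi_0\in(0,1)$ and let $F_0,F_1$ be continuous distribution functions. For each $n_v\ge1$, let $n_0\sim\mathrm{Binomial}(n_v,\pi_0)$, $n_1=n_v-n_0$, and let $k_0,k_1$ be random integers with $0\le k_0\le n_0$, $0\le k_1\le n_1$. Let $I\subset\mathbb R$ be nonempty compact, $g:I\to\mathbb R$, $\widehat g_{n_v}$ random real-valued functions on $I$, and $\widehat x_{n_v}$ random elements of $I$ (all measurable). Assume: (A1) $g$ is continuous on $I$; (A2) $\sup_{x\in I}|\widehat g_{n_v}(x)-g(x)|\to0$ in probability as $n_v\to\infty$; (A3) $\frac{n_0-k_0}{n_0}-(1-F_0(\widehat x_{n_v}))\to0$ and $\frac{k_1}{n_1}-F_1(\widehat x_{n_v})\to0$ in probability as $n_v\to\infty$ (the ratios being defined arbitrarily on the events $n_0=0$, resp. $n_1=0$); (A4) $g$ has a unique minimizer $x^*\in I$, and $\widehat g_{n_v}(\widehat x_{n_v})=\min_{x\in I}\widehat g_{n_v}(x)$. Then, as $n_v\to\infty$, $$\frac{n_0-k_0}{n_0+1}\xrightarrow{p}1-F_0(x^* ),\qquad \frac{k_1}{n_1+1}\xrightarrow{p}F_1(x^* ).$$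
   Context: In the paper: the validation set has $n_v$ i.i.d. instances, $n_0$ of class 0 and $n_1$ of class 1; $F_j$ is the continuous distribution function of the score in class $j$; $\widehat x_{n_v}$ is the THORS threshold, i.e. the minimizer of the empirical expected cost per instance $\widehat g_{n_v}$ on the validation set; $g(x)$ is the population expected cost per instance at threshold $x$; $k_0$ (resp. $k_1$) is the number of class-0 (resp. class-1) validation scores that are $\le\widehat x_{n_v}$, so $(n_0-k_0)/n_0$ and $k_1/n_1$ are the empirical false positive and false negative rates; $1-F_0(x)$ and $F_1(x)$ are the population false positive and false negative rates at threshold $x$. *)

theory Defs
  imports "HOL-Probability.Probability"
begin

definition conv_in_prob :: "'a measure \<Rightarrow> (nat \<Rightarrow> 'a \<Rightarrow> real) \<Rightarrow> real \<Rightarrow> bool" where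
  "conv_in_prob M X c \<longleftrightarrow>
     (\<forall>e>0. ((\<lambda>n. measure M {\<omega> \<in> space M. e < \<bar>X n \<omega> - c\<bar>}) \<longlongrightarrow> 0) sequentially)"

definition continuous_cdf :: "(real \<Rightarrow> real) \<Rightarrow> bool" where
  "continuous_cdf F \<longleftrightarrow> (\<exists>\<mu>. real_distribution \<mu> \<and> F = cdf \<mu>) \<and> continuous_on UNIV F"

end

theory Submission
  imports Defs
begin

text \<open>Since \<open>g\<close> has a unique, hence well-separated, minimiser on the compact set \<open>I\<close>,
  uniform closeness of \<open>ghat\<close> to \<open>g\<close> forces every minimiser of \<open>ghat\<close> to be close to \<open>x*\<close>,
  so the threshold \<open>xhat\<close> converges to \<open>x*\<close> in probability; by continuity \<open>F\<^sub>j(xhat)\<close> converges to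
  \<open>F\<^sub>j(x*)\<close>, and (A3) transfers this to the empirical error rates. By Hoeffding's inequality
  \<open>n\<^sub>0/n\<^sub>v \<rightarrow> \<pi>\<^sub>0\<close>, so both class sizes grow linearly, and replacing the denominator \<open>n\<^sub>j\<close> by
  \<open>n\<^sub>j + 1\<close> (which also removes the arbitrary values on \<open>n\<^sub>j = 0\<close>) changes a rate by at most
  \<open>1/n\<^sub>j \<rightarrow> 0\<close>.\<close>

lemma (in finite_measure) measure_tendsto_0_if_eventually_subset:
  assumes "\<And>n. B n \<in> sets M" "(\<lambda>n. measure M (B n)) \<longlonglongrightarrow> 0"
    and "eventually (\<lambda>n. A n \<subseteq> B n) sequentially"
  shows "(\<lambda>n. measure M (A n)) \<longlonglongrightarrow> 0"
proof (rule tendsto_sandwich[OF _ _ tendsto_const assms(2)])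
  show "eventually (\<lambda>n. measure M (A n) \<le> measure M (B n)) sequentially"
    using assms(3) by eventually_elim (use assms(1) finite_measure_mono in blast)
qed simp

lemma (in prob_space) conv_in_prob_dominated:
  assumes X: "\<And>n. X n \<in> borel_measurable M" and "conv_in_prob M X c"
    and dom: "\<And>e. e > 0 \<Longrightarrow> \<exists>d>0. eventually
       (\<lambda>n. \<forall>\<omega>\<in>space M. e < \<bar>Y n \<omega> - c'\<bar> \<longrightarrow> d < \<bar>X n \<omega> - c\<bar>) sequentially"
  shows "conv_in_prob M Y c'"
  unfolding conv_in_prob_def
proof safe
  fix e :: real assume "e > 0"
  then obtain d where "d > 0"
    and ev: "eventually (\<lambda>n. \<forall>\<omega>\<in>space M. e < \<bar>Y n \<omega> - c'\<bar> \<longrightarrow> d < \<bar>X n \<omega> - c\<bar>) sequentially"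
    using dom by blast
  show "(\<lambda>n. measure M {\<omega> \<in> space M. e < \<bar>Y n \<omega> - c'\<bar>}) \<longlonglongrightarrow> 0"
  proof (rule measure_tendsto_0_if_eventually_subset)
    show "{\<omega> \<in> space M. d < \<bar>X n \<omega> - c\<bar>} \<in> sets M" for n
      using X[of n] by measurable
    show "(\<lambda>n. measure M {\<omega> \<in> space M. d < \<bar>X n \<omega> - c\<bar>}) \<longlonglongrightarrow> 0"
      using assms(2) \<open>d > 0\<close> unfolding conv_in_prob_def by blast
  qed (use ev in \<open>eventually_elim, blast\<close>)
qed

lemma (in prob_space) conv_in_prob_continuous_map:
  assumes "\<And>n. X n \<in> borel_measurable M" "conv_in_prob M X c" "isCont f c"
  shows "conv_in_prob M (\<lambda>n \<omega>. f (X n \<omega>)) (f c)"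
proof (rule conv_in_prob_dominated[OF assms(1,2)])
  fix e :: real assume "e > 0"
  then obtain d where "d > 0" and d: "\<And>x. \<bar>x - c\<bar> < d \<Longrightarrow> \<bar>f x - f c\<bar> < e"
    using assms(3) unfolding continuous_at_eps_delta dist_real_def by blast
  have "d / 2 < \<bar>x - c\<bar>" if "e < \<bar>f x - f c\<bar>" for x
    using d[of x] \<open>d > 0\<close> that by fastforce
  then show "\<exists>d>0. eventually (\<lambda>n. \<forall>\<omega>\<in>space M. e < \<bar>f (X n \<omega>) - f c\<bar> \<longrightarrow> d < \<bar>X n \<omega> - c\<bar>) sequentially"
    using \<open>d > 0\<close> by (intro exI[of _ "d / 2"]) simp
qed

lemma (in prob_space) conv_in_prob_add:
  assumes X: "\<And>n. X n \<in> borel_measurable M" and Y: "\<And>n. Y n \<in> borel_measurable M"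
    and "conv_in_prob M X a" "conv_in_prob M Y b"
  shows "conv_in_prob M (\<lambda>n \<omega>. X n \<omega> + Y n \<omega>) (a + b)"
  unfolding conv_in_prob_def
proof safe
  fix e :: real assume "e > 0"
  define SX where "SX n = {\<omega> \<in> space M. e / 2 < \<bar>X n \<omega> - a\<bar>}" for n
  define SY where "SY n = {\<omega> \<in> space M. e / 2 < \<bar>Y n \<omega> - b\<bar>}" for n
  note [measurable] = X Y
  have [measurable]: "SX n \<in> sets M" "SY n \<in> sets M" for n
    unfolding SX_def SY_def by measurable
  have "(\<lambda>n. measure M (SX n)) \<longlonglongrightarrow> 0" "(\<lambda>n. measure M (SY n)) \<longlonglongrightarrow> 0"
    using assms(3,4) half_gt_zero[OF \<open>e > 0\<close>] unfolding conv_in_prob_def SX_def SY_def by blast+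
  then have lim: "(\<lambda>n. measure M (SX n) + measure M (SY n)) \<longlonglongrightarrow> 0"
    by (rule tendsto_add_zero)
  have "{\<omega> \<in> space M. e < \<bar>X n \<omega> + Y n \<omega> - (a + b)\<bar>} \<subseteq> SX n \<union> SY n" for n
  proof safe
    fix \<omega> assume "\<omega> \<in> space M" "e < \<bar>X n \<omega> + Y n \<omega> - (a + b)\<bar>" "\<omega> \<notin> SY n"
    moreover have "\<bar>X n \<omega> + Y n \<omega> - (a + b)\<bar> \<le> \<bar>X n \<omega> - a\<bar> + \<bar>Y n \<omega> - b\<bar>"
      using abs_triangle_ineq[of "X n \<omega> - a" "Y n \<omega> - b"] by (simp add: algebra_simps)
    ultimately show "\<omega> \<in> SX n"
      unfolding SX_def SY_def by auto
  qed
  then have "measure M {\<omega> \<in> space M. e < \<bar>X n \<omega> + Y n \<omega> - (a + b)\<bar>}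
      \<le> measure M (SX n) + measure M (SY n)" for n
    by (meson finite_measure_mono measure_Un_le order_trans sets.Un \<open>SX n \<in> sets M\<close> \<open>SY n \<in> sets M\<close>)
  then show "(\<lambda>n. measure M {\<omega> \<in> space M. e < \<bar>X n \<omega> + Y n \<omega> - (a + b)\<bar>}) \<longlonglongrightarrow> 0"
    by (intro tendsto_sandwich[OF _ _ tendsto_const lim] always_eventually) simp_all
qed

lemma (in prob_space) conv_in_prob_binomial_fraction:
  assumes p: "0 \<le> p" "p \<le> 1"
    and N: "\<And>n. N n \<in> M \<rightarrow>\<^sub>M count_space UNIV"
    and distr_N: "\<And>n. distr M (count_space UNIV) (N n) = measure_pmf (binomial_pmf n p)"
  shows "conv_in_prob M (\<lambda>n \<omega>. real (N n \<omega>) / real n) p"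
  unfolding conv_in_prob_def
proof safe
  fix e :: real assume "e > 0"
  have bd: "binomial_distribution p" using p by unfold_locales simp
  have bound: "measure M {\<omega> \<in> space M. e < \<bar>real (N n \<omega>) / real n - p\<bar>} \<le> 2 * exp (-2 * e\<^sup>2) ^ n"
    if "n > 0" for n
  proof -
    have "measure M {\<omega> \<in> space M. e < \<bar>real (N n \<omega>) / real n - p\<bar>}
        \<le> measure M (N n -` {x. e \<le> \<bar>real x / real n - p\<bar>} \<inter> space M)"
      by (rule finite_measure_mono[OF _ measurable_sets[OF N]]) auto
    also have "\<dots> = measure (distr M (count_space UNIV) (N n)) {x. e \<le> \<bar>real x / real n - p\<bar>}"
      by (subst measure_distr[OF N]) simp_all
    also have "\<dots> = measure_pmf.prob (binomial_pmf n p) {x. e \<le> \<bar>real x / real n - p\<bar>}"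
      by (simp only: distr_N)
    also have "\<dots> \<le> 2 * exp (-2 * real n * e\<^sup>2)"
      using binomial_distribution.prob_abs_ge'[OF bd \<open>n > 0\<close>, of e] \<open>e > 0\<close> by simp
    also have "\<dots> = 2 * exp (-2 * e\<^sup>2) ^ n"
      by (simp add: exp_of_nat_mult[symmetric] mult_ac)
    finally show ?thesis .
  qed
  have lim: "(\<lambda>n. 2 * exp (-2 * e\<^sup>2) ^ n) \<longlonglongrightarrow> 0"
    using \<open>e > 0\<close> by (intro tendsto_mult_right_zero LIMSEQ_power_zero) simp_all
  have "eventually (\<lambda>n. measure M {\<omega> \<in> space M. e < \<bar>real (N n \<omega>) / real n - p\<bar>}
      \<le> 2 * exp (-2 * e\<^sup>2) ^ n) sequentially"
    using eventually_gt_at_top[of 0] by eventually_elim (rule bound)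
  then show "(\<lambda>n. measure M {\<omega> \<in> space M. e < \<bar>real (N n \<omega>) / real n - p\<bar>}) \<longlonglongrightarrow> 0"
    using tendsto_sandwich[OF _ _ tendsto_const lim] by simp
qed

lemma (in prob_space) conv_in_prob_complement_fraction:
  assumes N: "\<And>n. N n \<in> M \<rightarrow>\<^sub>M count_space UNIV"
    and conv: "conv_in_prob M (\<lambda>n \<omega>. real (N n \<omega>) / real n) p" and "p \<le> 1"
  shows "conv_in_prob M (\<lambda>n \<omega>. real (n - N n \<omega>) / real n) (1 - p)"
proof (rule conv_in_prob_dominated[OF _ conv])
  show "(\<lambda>\<omega>. real (N n \<omega>) / real n) \<in> borel_measurable M" for n
    using N by measurable
  fix e :: real assume "e > 0"
  have sep: "e < \<bar>real (N n \<omega>) / real n - p\<bar>"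
    if "n > 0" "e < \<bar>real (n - N n \<omega>) / real n - (1 - p)\<bar>" for n \<omega>
  proof (cases "N n \<omega> \<le> n")
    case True
    then have "real (n - N n \<omega>) / real n = 1 - real (N n \<omega>) / real n"
      using \<open>n > 0\<close> by (simp add: of_nat_diff field_simps)
    then show ?thesis using that(2) by simp
  next
    case False
    then have "1 < real (N n \<omega>) / real n" using \<open>n > 0\<close> by (simp add: field_simps)
    then show ?thesis using that(2) False \<open>p \<le> 1\<close> by simp
  qed
  have "eventually (\<lambda>n. \<forall>\<omega>\<in>space M. e < \<bar>real (n - N n \<omega>) / real n - (1 - p)\<bar>
      \<longrightarrow> e < \<bar>real (N n \<omega>) / real n - p\<bar>) sequentially"
    using eventually_gt_at_top[of 0] by eventually_elim (use sep in blast)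
  then show "\<exists>d>0. eventually (\<lambda>n. \<forall>\<omega>\<in>space M. e < \<bar>real (n - N n \<omega>) / real n - (1 - p)\<bar>
      \<longrightarrow> d < \<bar>real (N n \<omega>) / real n - p\<bar>) sequentially"
    using \<open>e > 0\<close> by blast
qed

lemma abs_divide_Suc_diff_le:
  assumes "a \<le> m" "0 < m"
  shows "\<bar>real a / real (m + 1) - real a / real m\<bar> \<le> 1 / real m"
proof -
  have eq: "real a / real m - real a / real (m + 1) = real a / (real m * (real m + 1))"
    using assms by (simp add: field_simps)
  have "real a / (real m * (real m + 1)) \<le> real m / (real m * (real m + 1))"
    using assms by (intro divide_right_mono) auto
  also have "\<dots> \<le> 1 / real m"
    using assms by (simp add: divide_simps)
  finally show ?thesis
    using eq by (simp add: abs_minus_commute)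
qed

lemma (in prob_space) conv_in_prob_divide_Suc_diff:
  assumes N: "\<And>n. N n \<in> M \<rightarrow>\<^sub>M count_space UNIV"
    and conv: "conv_in_prob M (\<lambda>n \<omega>. real (N n \<omega>) / real n) p" and "p > 0"
    and A_le: "\<And>n \<omega>. \<omega> \<in> space M \<Longrightarrow> A n \<omega> \<le> N n \<omega>"
  shows "conv_in_prob M (\<lambda>n \<omega>. real (A n \<omega>) / real (N n \<omega> + 1)
           - (if N n \<omega> = 0 then c n \<omega> else real (A n \<omega>) / real (N n \<omega>))) 0"
proof (rule conv_in_prob_dominated[OF _ conv])
  show "(\<lambda>\<omega>. real (N n \<omega>) / real n) \<in> borel_measurable M" for n
    using N by measurable
  fix e :: real assume "e > 0"
  have "(\<lambda>n. (2 / p) / real n) \<longlonglongrightarrow> 0"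
    by (rule tendsto_divide_0[OF tendsto_const filterlim_at_top_imp_at_infinity[OF filterlim_real_sequentially]])
  then have small: "eventually (\<lambda>n. (2 / p) / real n < e) sequentially"
    using \<open>e > 0\<close> by (rule order_tendstoD(2))
  have sep: "p / 2 < \<bar>real (N n \<omega>) / real n - p\<bar>"
    if "n > 0" "(2 / p) / real n < e" "\<omega> \<in> space M"
      and big: "e < \<bar>real (A n \<omega>) / real (N n \<omega> + 1)
                  - (if N n \<omega> = 0 then c n \<omega> else real (A n \<omega>) / real (N n \<omega>)) - 0\<bar>" for n \<omega>
  proof (rule ccontr)
    assume "\<not> ?thesis"
    then have "p * real n / 2 \<le> real (N n \<omega>)"
      using \<open>n > 0\<close> by (auto simp: field_simps abs_if split: if_splits)
    moreover have "0 < p * real n / 2"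
      using \<open>p > 0\<close> \<open>n > 0\<close> by simp
    ultimately have "0 < N n \<omega>" "1 / real (N n \<omega>) \<le> (2 / p) / real n"
      using \<open>p > 0\<close> by (auto simp: field_simps)
    then have "\<bar>real (A n \<omega>) / real (N n \<omega> + 1) - real (A n \<omega>) / real (N n \<omega>)\<bar> < e"
      using abs_divide_Suc_diff_le[OF A_le[OF \<open>\<omega> \<in> space M\<close>] \<open>0 < N n \<omega>\<close>] that(2) by linarith
    then show False
      using big \<open>0 < N n \<omega>\<close> by simp
  qed
  have "eventually (\<lambda>n. \<forall>\<omega>\<in>space M. e < \<bar>real (A n \<omega>) / real (N n \<omega> + 1)
           - (if N n \<omega> = 0 then c n \<omega> else real (A n \<omega>) / real (N n \<omega>)) - 0\<bar>
           \<longrightarrow> p / 2 < \<bar>real (N n \<omega>) / real n - p\<bar>) sequentially"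
    using eventually_gt_at_top[of 0] small by eventually_elim (use sep in blast)
  then show "\<exists>d>0. eventually (\<lambda>n. \<forall>\<omega>\<in>space M. e < \<bar>real (A n \<omega>) / real (N n \<omega> + 1)
           - (if N n \<omega> = 0 then c n \<omega> else real (A n \<omega>) / real (N n \<omega>)) - 0\<bar>
           \<longrightarrow> d < \<bar>real (N n \<omega>) / real n - p\<bar>) sequentially"
    using \<open>p > 0\<close> by (intro exI[of _ "p / 2"]) simp
qed

lemma minimizer_close_to_unique_minimizer:
  fixes g :: "real \<Rightarrow> real"
  assumes "compact I" "continuous_on I g" "xs \<in> I"
    and unique: "\<And>x. x \<in> I \<Longrightarrow> x \<noteq> xs \<Longrightarrow> g xs < g x" and "\<delta> > 0"
  obtains \<eta> where "\<eta> > 0"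
    and "\<And>h x. x \<in> I \<Longrightarrow> (\<And>y. y \<in> I \<Longrightarrow> \<bar>h y - g y\<bar> \<le> \<eta>) \<Longrightarrow> h x \<le> h xs \<Longrightarrow> \<bar>x - xs\<bar> < \<delta>"
proof -
  define K where "K = I \<inter> {x. \<delta> \<le> \<bar>x - xs\<bar>}"
  show ?thesis
  proof (cases "K = {}")
    case True
    then show ?thesis
      using that[of 1] unfolding K_def by force
  next
    case False
    have "compact K"
      unfolding K_def using \<open>compact I\<close> by (intro compact_Int_closed closed_Collect_le continuous_intros)
    moreover have "continuous_on K g"
      using assms(2) by (rule continuous_on_subset) (auto simp: K_def)
    ultimately obtain x1 where x1: "x1 \<in> K" "\<And>y. y \<in> K \<Longrightarrow> g x1 \<le> g y"
      using continuous_attains_inf[OF _ False] by blast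
    have "g xs < g x1"
      using x1(1) unique \<open>\<delta> > 0\<close> unfolding K_def by force
    show ?thesis
    proof (rule that[of "(g x1 - g xs) / 3"])
      show "(g x1 - g xs) / 3 > 0"
        using \<open>g xs < g x1\<close> by simp
      fix h x assume "x \<in> I" and close: "\<And>y. y \<in> I \<Longrightarrow> \<bar>h y - g y\<bar> \<le> (g x1 - g xs) / 3"
        and "h x \<le> h xs"
      show "\<bar>x - xs\<bar> < \<delta>"
      proof (rule ccontr)
        assume "\<not> ?thesis"
        then have "g x1 \<le> g x"
          using x1(2) \<open>x \<in> I\<close> unfolding K_def by simp
        moreover have "g x - h x \<le> (g x1 - g xs) / 3" "h xs - g xs \<le> (g x1 - g xs) / 3"
          using close[OF \<open>x \<in> I\<close>] close[OF \<open>xs \<in> I\<close>] by (simp_all only: abs_le_iff) linarith+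
        ultimately show False
          using \<open>h x \<le> h xs\<close> \<open>g xs < g x1\<close> by (simp add: field_simps)
      qed
    qed
  qed
qed

lemma (in prob_space) conv_in_prob_argmin:
  fixes g :: "real \<Rightarrow> real"
  assumes "compact I" "continuous_on I g" "xs \<in> I"
    and unique: "\<And>x. x \<in> I \<Longrightarrow> x \<noteq> xs \<Longrightarrow> g xs < g x"
    and xhat_in: "\<And>n \<omega>. \<omega> \<in> space M \<Longrightarrow> xhat n \<omega> \<in> I"
    and xhat_min: "\<And>n \<omega> x. \<omega> \<in> space M \<Longrightarrow> x \<in> I \<Longrightarrow> ghat n \<omega> (xhat n \<omega>) \<le> ghat n \<omega> x"
    and sup_meas: "\<And>n. (\<lambda>\<omega>. SUP x\<in>I. ereal \<bar>ghat n \<omega> x - g x\<bar>) \<in> borel_measurable M"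
    and uniform: "\<And>e. e > 0 \<Longrightarrow>
       (\<lambda>n. measure M {\<omega> \<in> space M. ereal e < (SUP x\<in>I. ereal \<bar>ghat n \<omega> x - g x\<bar>)}) \<longlonglongrightarrow> 0"
  shows "conv_in_prob M xhat xs"
  unfolding conv_in_prob_def
proof safe
  fix \<delta> :: real assume "\<delta> > 0"
  obtain \<eta> where "\<eta> > 0" and \<eta>: "\<And>h x. x \<in> I \<Longrightarrow> (\<And>y. y \<in> I \<Longrightarrow> \<bar>h y - g y\<bar> \<le> \<eta>)
      \<Longrightarrow> h x \<le> h xs \<Longrightarrow> \<bar>x - xs\<bar> < \<delta>"
    using minimizer_close_to_unique_minimizer[OF assms(1-3) unique \<open>\<delta> > 0\<close>] by blast
  define S where "S n = {\<omega> \<in> space M. ereal \<eta> < (SUP x\<in>I. ereal \<bar>ghat n \<omega> x - g x\<bar>)}" for n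
  have S_sets: "S n \<in> sets M" for n
    unfolding S_def using sup_meas[of n] by measurable
  have S_lim: "(\<lambda>n. measure M (S n)) \<longlonglongrightarrow> 0"
    unfolding S_def by (rule uniform[OF \<open>\<eta> > 0\<close>])
  have S_sup: "{\<omega> \<in> space M. \<delta> < \<bar>xhat n \<omega> - xs\<bar>} \<subseteq> S n" for n
  proof safe
    fix \<omega> assume "\<omega> \<in> space M" "\<delta> < \<bar>xhat n \<omega> - xs\<bar>"
    show "\<omega> \<in> S n"
    proof (rule ccontr)
      assume "\<omega> \<notin> S n"
      then have "\<bar>ghat n \<omega> y - g y\<bar> \<le> \<eta>" if "y \<in> I" for y
        using \<open>\<omega> \<in> space M\<close> that unfolding S_def by (simp add: SUP_le_iff not_less)
      then have "\<bar>xhat n \<omega> - xs\<bar> < \<delta>"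
        using \<eta>[OF xhat_in[OF \<open>\<omega> \<in> space M\<close>]] xhat_min[OF \<open>\<omega> \<in> space M\<close> \<open>xs \<in> I\<close>] by blast
      then show False
        using \<open>\<delta> < \<bar>xhat n \<omega> - xs\<bar>\<close> by simp
    qed
  qed
  show "(\<lambda>n. measure M {\<omega> \<in> space M. \<delta> < \<bar>xhat n \<omega> - xs\<bar>}) \<longlonglongrightarrow> 0"
    using S_sets S_lim by (rule measure_tendsto_0_if_eventually_subset) (use S_sup in \<open>simp add: always_eventually\<close>)
qed

lemma (in prob_space) conv_in_prob_divide_Suc:
  assumes N: "\<And>n. N n \<in> M \<rightarrow>\<^sub>M count_space UNIV" and A: "\<And>n. A n \<in> M \<rightarrow>\<^sub>M count_space UNIV"
    and c: "\<And>n. c n \<in> borel_measurable M" and xhat: "\<And>n. xhat n \<in> borel_measurable M"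
    and frac: "conv_in_prob M (\<lambda>n \<omega>. real (N n \<omega>) / real n) p" "p > 0"
    and A_le: "\<And>n \<omega>. \<omega> \<in> space M \<Longrightarrow> A n \<omega> \<le> N n \<omega>"
    and "conv_in_prob M xhat xs" and G: "continuous_on UNIV G"
    and rate: "conv_in_prob M
       (\<lambda>n \<omega>. (if N n \<omega> = 0 then c n \<omega> else real (A n \<omega>) / real (N n \<omega>)) - G (xhat n \<omega>)) 0"
  shows "conv_in_prob M (\<lambda>n \<omega>. real (A n \<omega>) / real (N n \<omega> + 1)) (G xs)"
proof -
  note [measurable] = N A c xhat borel_measurable_continuous_onI[OF G]
  define R where "R n \<omega> = (if N n \<omega> = 0 then c n \<omega> else real (A n \<omega>) / real (N n \<omega>))" for n \<omega>
  have [measurable]: "R n \<in> borel_measurable M" for n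
    unfolding R_def by measurable
  have G_conv: "conv_in_prob M (\<lambda>n \<omega>. G (xhat n \<omega>)) (G xs)"
    using G by (intro conv_in_prob_continuous_map[OF xhat \<open>conv_in_prob M xhat xs\<close>])
      (simp add: continuous_on_eq_continuous_at)
  have "conv_in_prob M (\<lambda>n \<omega>. (R n \<omega> - G (xhat n \<omega>)) + G (xhat n \<omega>)) (0 + G xs)"
    by (rule conv_in_prob_add[OF _ _ rate[folded R_def] G_conv]) measurable
  then have R_conv: "conv_in_prob M R (G xs)"
    by simp
  have "conv_in_prob M (\<lambda>n \<omega>. real (A n \<omega>) / real (N n \<omega> + 1) - R n \<omega>) 0"
    unfolding R_def by (rule conv_in_prob_divide_Suc_diff[OF N frac A_le])
  from conv_in_prob_add[OF _ _ this R_conv] show ?thesis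
    by simp
qed

theorem theorem6:
  fixes M :: "'a measure"
    and \<pi>0 :: real
    and F0 F1 :: "real \<Rightarrow> real"
    and n0 k0 k1 :: "nat \<Rightarrow> 'a \<Rightarrow> nat"
    and c0 c1 :: "nat \<Rightarrow> 'a \<Rightarrow> real"
    and I :: "real set"
    and g :: "real \<Rightarrow> real"
    and ghat :: "nat \<Rightarrow> 'a \<Rightarrow> real \<Rightarrow> real"
    and xhat :: "nat \<Rightarrow> 'a \<Rightarrow> real"
    and xs :: real
  assumes P: "prob_space M"
    and pi0: "0 < \<pi>0" "\<pi>0 < 1"
    and F0: "continuous_cdf F0" and F1: "continuous_cdf F1"
    and n0_meas: "\<And>n. n0 n \<in> M \<rightarrow>\<^sub>M count_space UNIV"
    and n0_binom: "\<And>n. distr M (count_space UNIV) (n0 n) = measure_pmf (binomial_pmf n \<pi>0)"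
    and k0_meas: "\<And>n. k0 n \<in> M \<rightarrow>\<^sub>M count_space UNIV"
    and k1_meas: "\<And>n. k1 n \<in> M \<rightarrow>\<^sub>M count_space UNIV"
    and k0_le: "\<And>n \<omega>. \<omega> \<in> space M \<Longrightarrow> k0 n \<omega> \<le> n0 n \<omega>"
    and k1_le: "\<And>n \<omega>. \<omega> \<in> space M \<Longrightarrow> k1 n \<omega> \<le> n - n0 n \<omega>"
    and I: "compact I" "I \<noteq> {}"
    and ghat_meas: "\<And>n x. x \<in> I \<Longrightarrow> (\<lambda>\<omega>. ghat n \<omega> x) \<in> borel_measurable M"
    and xhat_meas: "\<And>n. xhat n \<in> borel_measurable M"
    and xhat_in: "\<And>n \<omega>. \<omega> \<in> space M \<Longrightarrow> xhat n \<omega> \<in> I"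
    and c_meas: "\<And>n. c0 n \<in> borel_measurable M" "\<And>n. c1 n \<in> borel_measurable M"
    and A1: "continuous_on I g"
    and sup_meas: "\<And>n. (\<lambda>\<omega>. SUP x\<in>I. ereal \<bar>ghat n \<omega> x - g x\<bar>) \<in> borel_measurable M"
    and A2: "\<And>e. e > 0 \<Longrightarrow>
       ((\<lambda>n. measure M {\<omega> \<in> space M. ereal e < (SUP x\<in>I. ereal \<bar>ghat n \<omega> x - g x\<bar>)}) \<longlongrightarrow> 0) sequentially"
    and A3a: "conv_in_prob M
       (\<lambda>n \<omega>. (if n0 n \<omega> = 0 then c0 n \<omega>
               else real (n0 n \<omega> - k0 n \<omega>) / real (n0 n \<omega>)) - (1 - F0 (xhat n \<omega>))) 0"
    and A3b: "conv_in_prob M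
       (\<lambda>n \<omega>. (if n - n0 n \<omega> = 0 then c1 n \<omega>
               else real (k1 n \<omega>) / real (n - n0 n \<omega>)) - F1 (xhat n \<omega>)) 0"
    and A4a: "xs \<in> I" "\<And>x. x \<in> I \<Longrightarrow> x \<noteq> xs \<Longrightarrow> g xs < g x"
    and A4b: "\<And>n \<omega> x. \<omega> \<in> space M \<Longrightarrow> x \<in> I \<Longrightarrow> ghat n \<omega> (xhat n \<omega>) \<le> ghat n \<omega> x"
  shows "conv_in_prob M (\<lambda>n \<omega>. real (n0 n \<omega> - k0 n \<omega>) / real (n0 n \<omega> + 1)) (1 - F0 xs)
         \<and> conv_in_prob M (\<lambda>n \<omega>. real (k1 n \<omega>) / real (n - n0 n \<omega> + 1)) (F1 xs)"
proof -
  interpret prob_space M by (rule P)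
  have xhat_conv: "conv_in_prob M xhat xs"
    by (rule conv_in_prob_argmin[OF I(1) A1 A4a xhat_in A4b sup_meas A2])
  have frac0: "conv_in_prob M (\<lambda>n \<omega>. real (n0 n \<omega>) / real n) \<pi>0"
    using pi0 by (intro conv_in_prob_binomial_fraction[OF _ _ n0_meas n0_binom]) simp_all
  have frac1: "conv_in_prob M (\<lambda>n \<omega>. real (n - n0 n \<omega>) / real n) (1 - \<pi>0)"
    using pi0 by (intro conv_in_prob_complement_fraction[OF n0_meas frac0]) simp
  have F0c: "continuous_on UNIV F0" and F1c: "continuous_on UNIV F1"
    using F0 F1 unfolding continuous_cdf_def by simp_all
  have "conv_in_prob M (\<lambda>n \<omega>. real (n0 n \<omega> - k0 n \<omega>) / real (n0 n \<omega> + 1)) (1 - F0 xs)"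
  proof (rule conv_in_prob_divide_Suc[OF n0_meas _ c_meas(1) xhat_meas frac0 pi0(1) _ xhat_conv _ A3a])
    show "(\<lambda>\<omega>. n0 n \<omega> - k0 n \<omega>) \<in> M \<rightarrow>\<^sub>M count_space UNIV" for n
      using n0_meas k0_meas by measurable
    show "continuous_on UNIV (\<lambda>x. 1 - F0 x)"
      by (intro continuous_intros F0c)
  qed simp
  moreover have "conv_in_prob M (\<lambda>n \<omega>. real (k1 n \<omega>) / real (n - n0 n \<omega> + 1)) (F1 xs)"
  proof (rule conv_in_prob_divide_Suc[OF _ k1_meas c_meas(2) xhat_meas frac1 _ k1_le xhat_conv F1c A3b])
    show "(\<lambda>\<omega>. n - n0 n \<omega>) \<in> M \<rightarrow>\<^sub>M count_space UNIV" for n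
      using n0_meas by measurable
  qed (use pi0 in simp)
  ultimately show ?thesis ..
qed

end
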